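(* Let $a\in C^\infty(\mathbb{R})$ satisfy condition (A). The function \[ q(\xi_1,\xi_2):=\frac{\xi_1a(\xi_1)+\xi_2a(\xi_2)}{\xi_1+\xi_2},\qquad(\xi_1,\xi_2)\in\mathbb{R}^2,\ \xi_1+\xi_2\ne0, \] extends to a smooth positive function on $\mathbb{R}^2$ (namely $q(\xi_1,\xi_2)=\int_0^1(\xi a(\xi))'(-\xi_2+(\xi_1+\xi_2)t)\,dt$). Moreover, with $\xi_{\max}:=|\xi_1|\vee|\xi_2|$: (i) $q(\xi_1,\xi_2)\sim a(\xi_{\max})$, and $|\partial_1^{\gamma_1}\partial_2^{\gamma_2}q(\xi_1,\xi_2)|\lesssim\langle\xi_1\rangle^{-\gamma_1}\langle\xi_2\rangle^{-\gamma_2}a(\xi_{\max})$ for $1\le\gamma_1+\gamma_2\le3$; (ii) $|\partial_1^{\gamma_1}\partial_2^{\gamma_2}(\partial_1-\partial_2)q(\xi_1,\xi_2)|\lesssim\langle\xi_1\rangle^{-\gamma_1}\langle\xi_2\rangle^{-\gamma_2}\langle\xi_{\max}\rangle^{-1}a(\xi_{\max})$ for $0\le\gamma_1+\gamma_2\le3$, for all $(\xi_1,\xi_2)\in\mathbb{R}^2$, with implicit constants depending only on those in (A).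
   Context: Condition (A) on $a$: $a$ is positive, even, non-decreasing on $[0,\infty)$, constant on $[-1,1]$; $a(2\xi)\lesssim a(\xi)$ for all $\xi>0$; $a(N_1)/a(N_2)\gtrsim(N_1/N_2)^{1/2}$ for all dyadic $N_1>N_2\ge1$ (dyadic meaning powers of $2$); $|\partial_\xi^ja(\xi)|\lesssim\langle\xi\rangle^{-j}a(\xi)$ for all $\xi\in\mathbb{R}$, $1\le j\le5$, where $\langle\xi\rangle=(1+\xi^2)^{1/2}$. $A\sim B$ means $A\lesssim B\lesssim A$. *)

theory Defs
  imports "HOL-Analysis.Analysis"
begin

definition jbr :: "real \<Rightarrow> real" where
  "jbr x = sqrt (1 + x\<^sup>2)"

definition smooth1 :: "(real \<Rightarrow> real) \<Rightarrow> bool" where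
  "smooth1 f \<longleftrightarrow> (\<forall>k x. ((deriv ^^ k) f) differentiable (at x))"

definition pd1 :: "(real \<times> real \<Rightarrow> real) \<Rightarrow> real \<times> real \<Rightarrow> real" where
  "pd1 f = (\<lambda>(x, y). deriv (\<lambda>s. f (s, y)) x)"

definition pd2 :: "(real \<times> real \<Rightarrow> real) \<Rightarrow> real \<times> real \<Rightarrow> real" where
  "pd2 f = (\<lambda>(x, y). deriv (\<lambda>s. f (x, s)) y)"

definition pdw :: "bool list \<Rightarrow> (real \<times> real \<Rightarrow> real) \<Rightarrow> real \<times> real \<Rightarrow> real" where
  "pdw ds f = foldr (\<lambda>d g. if d then pd1 g else pd2 g) ds f"

text \<open>C^infinity on R^2: all iterated partial derivatives, in any order, exist everywhere
  and are continuous (this is equivalent to being C^infinity).\<close>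
definition smooth2 :: "(real \<times> real \<Rightarrow> real) \<Rightarrow> bool" where
  "smooth2 f \<longleftrightarrow> (\<forall>ds. continuous_on UNIV (pdw ds f) \<and>
      (\<forall>x y. (\<lambda>s. pdw ds f (s, y)) differentiable (at x) \<and>
             (\<lambda>s. pdw ds f (x, s)) differentiable (at y)))"

text \<open>Condition (A) with all implicit constants bounded by a single constant C.\<close>
definition condA :: "real \<Rightarrow> (real \<Rightarrow> real) \<Rightarrow> bool" where
  "condA C a \<longleftrightarrow>
     (\<forall>x. a x > 0) \<and> (\<forall>x. a (- x) = a x) \<and> mono_on {0..} a \<and>
     (\<forall>x\<in>{-1..1}. a x = a 0) \<and>
     (\<forall>x>0. a (2 * x) \<le> C * a x) \<and>
     (\<forall>m n :: nat. (2::real) ^ m > 2 ^ n \<longrightarrow>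
        a (2 ^ m) / a (2 ^ n) \<ge> (1 / C) * sqrt (2 ^ m / 2 ^ n)) \<and>
     (\<forall>j\<in>{1..5::nat}. \<forall>x. \<bar>(deriv ^^ j) a x\<bar> \<le> C * a x / jbr x ^ j)"

end

theory Submission
  imports Defs
begin

text \<open>Let \<open>M = max \<bar>\<xi>\<^sub>1\<bar> \<bar>\<xi>\<^sub>2\<bar>\<close>. Since \<open>\<xi>\<^sub>1 + \<xi>\<^sub>2\<close> is the length of the segment from
  \<open>-\<xi>\<^sub>2\<close> to \<open>\<xi>\<^sub>1\<close>, \<open>q\<close> is the mean of \<open>(\<xi> a(\<xi>))'\<close> along that segment, which extends it smoothly
  across the antidiagonal. Differentiating in \<open>\<xi>\<^sub>1\<close> or \<open>\<xi>\<^sub>2\<close> multiplies the integrand by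
  \<open>t\<close> or \<open>t - 1\<close> and raises the order of the derivative of \<open>\<xi> a(\<xi>)\<close>, so every derivative of
  \<open>q\<close> is a weighted mean of a higher derivative of \<open>\<xi> a(\<xi>)\<close>. If \<open>M \<le> 1\<close> or
  \<open>2 \<bar>\<xi>\<^sub>1 + \<xi>\<^sub>2\<bar> \<le> M\<close>, the segment stays at distance \<open>\<ge> M / 2\<close> from the origin and
  condition (A) bounds the integrand pointwise. Otherwise \<open>\<bar>\<xi>\<^sub>1 + \<xi>\<^sub>2\<bar> > M / 2\<close>, and integrating
  by parts in \<open>t\<close> trades one derivative for a factor \<open>1 / (\<xi>\<^sub>1 + \<xi>\<^sub>2)\<close> plus endpoint terms,
  which gives the bounds by induction on the order. The lower bound \<open>a(M) \<le> 2 q\<close> holds because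
  \<open>a\<close> is even and nondecreasing in \<open>\<bar>\<xi>\<bar>\<close>.\<close>

lemma jbr_ge_1: "1 \<le> jbr s"
  unfolding jbr_def by simp

lemma jbr_pos: "0 < jbr s"
  using jbr_ge_1[of s] by linarith

lemma jbr_nonneg [simp]: "0 \<le> jbr s"
  using jbr_pos[of s] by linarith

lemma abs_le_jbr: "\<bar>s\<bar> \<le> jbr s"
  unfolding jbr_def by (simp add: real_le_rsqrt)

lemma jbr_minus [simp]: "jbr (- s) = jbr s"
  unfolding jbr_def by simp

lemma jbr_mono: "\<bar>u\<bar> \<le> \<bar>v\<bar> \<Longrightarrow> jbr u \<le> jbr v"
  unfolding jbr_def by (simp add: abs_le_square_iff)

lemma jbr_le_2: "\<bar>s\<bar> \<le> 1 \<Longrightarrow> jbr s \<le> 2"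
proof -
  assume "\<bar>s\<bar> \<le> 1"
  then have "jbr s \<le> jbr 1" by (intro jbr_mono) simp
  also have "jbr 1 \<le> 2" unfolding jbr_def by (rule real_le_lsqrt) auto
  finally show ?thesis .
qed

lemma jbr_le_twice: "1 \<le> M \<Longrightarrow> jbr M \<le> 2 * M"
proof -
  assume "1 \<le> M"
  then have "1 \<le> M * M" using mult_mono[of 1 M 1 M] by simp
  then show ?thesis unfolding jbr_def using \<open>1 \<le> M\<close> by (intro real_le_lsqrt) (auto simp: power2_eq_square)
qed

lemma jbr_le_twice_jbr: "0 \<le> M \<Longrightarrow> M \<le> 2 * \<bar>s\<bar> \<Longrightarrow> jbr M \<le> 2 * jbr s"
proof -
  assume "0 \<le> M" "M \<le> 2 * \<bar>s\<bar>"
  then have "M\<^sup>2 \<le> (2 * \<bar>s\<bar>)\<^sup>2" by (intro power_mono) auto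
  then have "1 + M\<^sup>2 \<le> (2 * jbr s)\<^sup>2" unfolding jbr_def by (simp add: power_mult_distrib)
  then show ?thesis
    using real_le_lsqrt[of "2 * jbr s" "1 + M\<^sup>2"] jbr_pos[of s] unfolding jbr_def by simp
qed

lemma jbr_monomial_le:
  assumes "jbr x \<le> B" "jbr y \<le> B" "jbr z \<le> B"
  shows "jbr x ^ \<alpha> * jbr y ^ \<beta> * jbr z ^ e \<le> B ^ (\<alpha> + \<beta> + e)"
proof -
  have "0 \<le> B" using assms(1) jbr_pos[of x] by linarith
  then have "jbr x ^ \<alpha> * jbr y ^ \<beta> * jbr z ^ e \<le> B ^ \<alpha> * B ^ \<beta> * B ^ e"
    using assms jbr_pos by (intro mult_mono power_mono) (auto simp: less_imp_le)
  then show ?thesis by (simp add: power_add)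
qed

lemma abs_segment_le_max:
  fixes x y t :: real
  assumes "t \<in> {0..1}"
  shows "\<bar>- y + (x + y) * t\<bar> \<le> max \<bar>x\<bar> \<bar>y\<bar>"
proof -
  have "\<bar>- y + (x + y) * t\<bar> = \<bar>t * x + (1 - t) * (- y)\<bar>" by (simp add: algebra_simps)
  also have "\<dots> \<le> t * \<bar>x\<bar> + (1 - t) * \<bar>y\<bar>"
    using assms abs_triangle_ineq[of "t * x" "(1 - t) * (- y)"] by (simp add: abs_mult)
  also have "\<dots> \<le> t * max \<bar>x\<bar> \<bar>y\<bar> + (1 - t) * max \<bar>x\<bar> \<bar>y\<bar>"
    using assms by (intro add_mono mult_left_mono) auto
  finally show ?thesis by (simp add: algebra_simps)
qed

lemma max_le_twice_abs_segment:
  fixes x y t :: real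
  assumes "t \<in> {0..1}" "2 * \<bar>x + y\<bar> \<le> max \<bar>x\<bar> \<bar>y\<bar>"
  shows "max \<bar>x\<bar> \<bar>y\<bar> \<le> 2 * \<bar>- y + (x + y) * t\<bar>"
proof -
  define s where "s = - y + (x + y) * t"
  have "\<bar>(x + y) * (1 - t)\<bar> \<le> \<bar>x + y\<bar>" "\<bar>(x + y) * t\<bar> \<le> \<bar>x + y\<bar>"
    using assms(1) by (simp_all add: abs_mult mult_left_le)
  moreover have "s = x - (x + y) * (1 - t)" "s = - y + (x + y) * t"
    unfolding s_def by (simp_all add: algebra_simps)
  ultimately have "\<bar>x\<bar> - \<bar>x + y\<bar> \<le> \<bar>s\<bar>" "\<bar>y\<bar> - \<bar>x + y\<bar> \<le> \<bar>s\<bar>"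
    by linarith+
  then show ?thesis using assms(2) unfolding s_def by (simp add: max_def split: if_splits)
qed

lemma jbr_monomial_le_segment:
  fixes x y t :: real
  assumes t: "t \<in> {0..1}" and n: "\<alpha> + \<beta> + e \<le> 4"
    and regime: "max \<bar>x\<bar> \<bar>y\<bar> \<le> 1 \<or> 2 * \<bar>x + y\<bar> \<le> max \<bar>x\<bar> \<bar>y\<bar>"
  shows "jbr x ^ \<alpha> * jbr y ^ \<beta> * jbr (max \<bar>x\<bar> \<bar>y\<bar>) ^ e
           \<le> 16 * jbr (- y + (x + y) * t) ^ (\<alpha> + \<beta> + e)"
proof -
  define n where "n = \<alpha> + \<beta> + e"
  define J where "J = jbr (- y + (x + y) * t)"
  have pow2: "(2::real) ^ n \<le> 16"
    using power_increasing[of n 4 "2::real"] n unfolding n_def by simp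
  have J: "1 \<le> J ^ n" unfolding J_def using jbr_ge_1 by simp
  from regime have "jbr x ^ \<alpha> * jbr y ^ \<beta> * jbr (max \<bar>x\<bar> \<bar>y\<bar>) ^ e \<le> 2 ^ n * J ^ n"
  proof
    assume "max \<bar>x\<bar> \<bar>y\<bar> \<le> 1"
    then have "jbr x ^ \<alpha> * jbr y ^ \<beta> * jbr (max \<bar>x\<bar> \<bar>y\<bar>) ^ e \<le> 2 ^ n"
      unfolding n_def by (intro jbr_monomial_le jbr_le_2) auto
    also have "\<dots> \<le> 2 ^ n * J ^ n" using J by simp
    finally show ?thesis .
  next
    assume "2 * \<bar>x + y\<bar> \<le> max \<bar>x\<bar> \<bar>y\<bar>"
    then have "jbr (max \<bar>x\<bar> \<bar>y\<bar>) \<le> 2 * J"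
      unfolding J_def by (intro jbr_le_twice_jbr max_le_twice_abs_segment t) auto
    moreover have "jbr x \<le> jbr (max \<bar>x\<bar> \<bar>y\<bar>)" "jbr y \<le> jbr (max \<bar>x\<bar> \<bar>y\<bar>)"
      by (simp_all add: jbr_mono)
    ultimately show ?thesis
      unfolding n_def power_mult_distrib[symmetric] by (intro jbr_monomial_le) auto
  qed
  also have "\<dots> \<le> 16 * J ^ n" using pow2 J by (intro mult_right_mono) auto
  finally show ?thesis unfolding n_def J_def .
qed

definition seg_integral ::
    "(nat \<Rightarrow> real \<Rightarrow> real) \<Rightarrow> (real \<Rightarrow> real) \<Rightarrow> nat \<Rightarrow> real \<times> real \<Rightarrow> real" where
  "seg_integral D w k z = integral {0..1} (\<lambda>t. w t * D k (- snd z + (fst z + snd z) * t))"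

definition bweight :: "nat \<Rightarrow> nat \<Rightarrow> real \<Rightarrow> real" where
  "bweight \<alpha> \<beta> t = t ^ \<alpha> * (t - 1) ^ \<beta>"

lemma continuous_on_bweight: "continuous_on UNIV (bweight \<alpha> \<beta>)"
  unfolding bweight_def by (intro continuous_intros)

lemma bweight_0_0: "bweight 0 0 = (\<lambda>t. 1)"
  by (simp add: bweight_def fun_eq_iff)

lemma has_real_derivative_bweight:
  "(bweight \<alpha> \<beta> has_real_derivative
      of_nat \<alpha> * bweight (\<alpha> - 1) \<beta> t + of_nat \<beta> * bweight \<alpha> (\<beta> - 1) t) (at t)"
  unfolding bweight_def[abs_def] by (auto intro!: derivative_eq_intros simp: algebra_simps)

lemma abs_bweight_le_1: "t \<in> {0..1} \<Longrightarrow> \<bar>bweight \<alpha> \<beta> t\<bar> \<le> 1"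
  unfolding bweight_def by (auto simp: abs_mult power_abs intro!: mult_le_one power_le_one)

locale derivative_tower =
  fixes D :: "nat \<Rightarrow> real \<Rightarrow> real"
  assumes has_real_derivative_tower: "\<And>k s. (D k has_real_derivative D (Suc k) s) (at s)"
begin

lemma continuous_on_tower: "continuous_on UNIV (D k)"
  by (meson DERIV_isCont continuous_at_imp_continuous_on has_real_derivative_tower)

lemma continuous_on_affine_integrand:
  fixes w b c :: "real \<Rightarrow> real"
  assumes "continuous_on UNIV w" "continuous_on UNIV b" "continuous_on UNIV c"
  shows "continuous_on UNIV (\<lambda>t. w t * D k (b t + s * c t))"
  by (intro continuous_intros assms continuous_on_compose2[OF continuous_on_tower]) auto

lemma integrable_affine_integrand:
  fixes w b c :: "real \<Rightarrow> real"
  assumes "continuous_on UNIV w" "continuous_on UNIV b" "continuous_on UNIV c"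
  shows "(\<lambda>t. w t * D k (b t + s * c t)) integrable_on {0..1}"
  using continuous_on_affine_integrand[OF assms]
  by (auto intro: integrable_continuous_real continuous_on_subset)

lemma has_real_derivative_affine_integral:
  fixes w b c :: "real \<Rightarrow> real"
  assumes w: "continuous_on UNIV w" and b: "continuous_on UNIV b" and c: "continuous_on UNIV c"
  shows "((\<lambda>s. integral {0..1} (\<lambda>t. w t * D k (b t + s * c t))) has_real_derivative
           integral {0..1} (\<lambda>t. c t * w t * D (Suc k) (b t + s0 * c t))) (at s0)"
proof -
  have "((\<lambda>s. integral (cbox 0 1) (\<lambda>t. w t * D k (b t + s * c t))) has_field_derivative
      integral (cbox 0 1) (\<lambda>t. c t * w t * D (Suc k) (b t + s0 * c t))) (at s0 within UNIV)"
  proof (rule leibniz_rule_field_derivative)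
    fix s t :: real
    have "((\<lambda>s. b t + s * c t) has_real_derivative c t) (at s)"
      by (auto intro!: derivative_eq_intros)
    from DERIV_cmult[OF DERIV_chain2[OF has_real_derivative_tower this], of "w t"]
    show "((\<lambda>s. w t * D k (b t + s * c t)) has_real_derivative c t * w t * D (Suc k) (b t + s * c t))
        (at s within UNIV)"
      by (simp add: mult_ac)
  next
    show "(\<lambda>t. w t * D k (b t + s * c t)) integrable_on cbox 0 1" for s
      using integrable_affine_integrand[OF w b c] by simp
  next
    show "continuous_on (UNIV \<times> cbox 0 1) (\<lambda>(s, t). c t * w t * D (Suc k) (b t + s * c t))"
      by (auto simp: split_beta intro!: continuous_intros continuous_on_compose2[OF w]
          continuous_on_compose2[OF b] continuous_on_compose2[OF c]
          continuous_on_compose2[OF continuous_on_tower])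
  qed auto
  then show ?thesis by simp
qed

lemma has_real_derivative_seg_integral_fst:
  assumes w: "continuous_on UNIV w"
  shows "((\<lambda>s. seg_integral D w k (s, y)) has_real_derivative
           seg_integral D (\<lambda>t. t * w t) (Suc k) (x, y)) (at x)"
proof -
  have "continuous_on UNIV (\<lambda>t. y * t - y)" "continuous_on UNIV (\<lambda>t::real. t)"
    by (intro continuous_intros)+
  from has_real_derivative_affine_integral[OF w this, of k x] show ?thesis
    by (simp add: seg_integral_def algebra_simps)
qed

lemma has_real_derivative_seg_integral_snd:
  assumes w: "continuous_on UNIV w"
  shows "((\<lambda>s. seg_integral D w k (x, s)) has_real_derivative
           seg_integral D (\<lambda>t. (t - 1) * w t) (Suc k) (x, y)) (at y)"
proof -
  have "continuous_on UNIV (\<lambda>t. x * t)" "continuous_on UNIV (\<lambda>t::real. t - 1)"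
    by (intro continuous_intros)+
  from has_real_derivative_affine_integral[OF w this, of k y] show ?thesis
    by (simp add: seg_integral_def algebra_simps)
qed

lemma pd1_seg_integral:
  "continuous_on UNIV w \<Longrightarrow> pd1 (seg_integral D w k) = seg_integral D (\<lambda>t. t * w t) (Suc k)"
  using has_real_derivative_seg_integral_fst by (auto simp: pd1_def intro!: ext DERIV_imp_deriv)

lemma pd2_seg_integral:
  "continuous_on UNIV w \<Longrightarrow> pd2 (seg_integral D w k) = seg_integral D (\<lambda>t. (t - 1) * w t) (Suc k)"
  using has_real_derivative_seg_integral_snd by (auto simp: pd2_def intro!: ext DERIV_imp_deriv)

lemma continuous_on_seg_integral:
  assumes w: "continuous_on UNIV w"
  shows "continuous_on UNIV (seg_integral D w k)"
proof -
  have "continuous_on UNIV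
      (\<lambda>z. integral (cbox 0 1) (\<lambda>t. w t * D k (- snd z + (fst z + snd z) * t)))"
    by (rule integral_continuous_on_param)
      (auto simp: split_beta intro!: continuous_intros continuous_on_compose2[OF w]
        continuous_on_compose2[OF continuous_on_tower])
  then show ?thesis unfolding seg_integral_def[abs_def] by simp
qed

lemma seg_integral_lincomb:
  assumes "continuous_on UNIV w1" "continuous_on UNIV w2"
  shows "seg_integral D (\<lambda>t. c1 * w1 t + c2 * w2 t) k z
           = c1 * seg_integral D w1 k z + c2 * seg_integral D w2 k z"
proof -
  have "(\<lambda>t. w t * D k (- snd z + (fst z + snd z) * t)) integrable_on {0..1}"
    if "continuous_on UNIV w" for w
    using integrable_affine_integrand[OF that, where b="\<lambda>_. - snd z" and c="\<lambda>t. t" and s="fst z + snd z"]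
    by simp
  from integral_add[OF integrable_cmul[OF this[OF assms(1)], of c1] integrable_cmul[OF this[OF assms(2)], of c2]]
  show ?thesis unfolding seg_integral_def by (simp add: algebra_simps integral_mult_right)
qed

lemma seg_integral_by_parts:
  assumes dw: "\<And>t. (w has_real_derivative w' t) (at t)" and w': "continuous_on UNIV w'"
    and xy: "x + y \<noteq> 0"
  shows "seg_integral D w (Suc k) (x, y)
           = (w 1 * D k x - w 0 * D k (- y) - seg_integral D w' k (x, y)) / (x + y)"
proof -
  have w: "continuous_on UNIV w"
    by (meson DERIV_isCont continuous_at_imp_continuous_on dw)
  define g where "g t = w t * D k (- y + (x + y) * t)" for t
  have "((\<lambda>t. w' t * D k (- y + (x + y) * t) + (x + y) * (w t * D (Suc k) (- y + (x + y) * t)))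
          has_integral g 1 - g 0) {0..1}"
  proof (rule fundamental_theorem_of_calculus)
    fix t :: real
    have "((\<lambda>t. - y + (x + y) * t) has_real_derivative (x + y)) (at t)"
      by (auto intro!: derivative_eq_intros)
    from DERIV_mult[OF dw DERIV_chain2[OF has_real_derivative_tower this]]
    show "(g has_vector_derivative
        w' t * D k (- y + (x + y) * t) + (x + y) * (w t * D (Suc k) (- y + (x + y) * t))) (at t within {0..1})"
      unfolding g_def has_real_derivative_iff_has_vector_derivative[symmetric]
      by (auto intro: has_field_derivative_at_within simp: algebra_simps)
  qed simp
  moreover have "((\<lambda>t. v t * D j (- y + (x + y) * t)) has_integral seg_integral D v j (x, y)) {0..1}"
    if "continuous_on UNIV v" for v j
    using integrable_affine_integrand[OF that, where b="\<lambda>_. - y" and c="\<lambda>t. t" and s="x + y"]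
    unfolding seg_integral_def by (simp add: integrable_integral)
  ultimately have "g 1 - g 0 = seg_integral D w' k (x, y) + (x + y) * seg_integral D w (Suc k) (x, y)"
    using has_integral_unique has_integral_add[OF _ has_integral_mult_right] w w' by blast
  then show ?thesis using xy by (simp add: g_def field_simps)
qed

lemma pdw_seg_integral:
  assumes "continuous_on UNIV w"
  shows "\<exists>v. continuous_on UNIV v \<and> pdw ds (seg_integral D w k) = seg_integral D v (k + length ds)"
proof (induction ds)
  case Nil
  then show ?case using assms by (auto simp: pdw_def)
next
  case (Cons d ds)
  then obtain v where v: "continuous_on UNIV v" "pdw ds (seg_integral D w k) = seg_integral D v (k + length ds)"
    by blast
  show ?case
  proof (cases d)
    case True
    then have "pdw (d # ds) (seg_integral D w k) = seg_integral D (\<lambda>t. t * v t) (k + length (d # ds))"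
      using v pd1_seg_integral by (simp add: pdw_def)
    then show ?thesis using v(1) by (intro exI[of _ "\<lambda>t. t * v t"]) (auto intro!: continuous_intros)
  next
    case False
    then have "pdw (d # ds) (seg_integral D w k) = seg_integral D (\<lambda>t. (t - 1) * v t) (k + length (d # ds))"
      using v pd2_seg_integral by (simp add: pdw_def)
    then show ?thesis using v(1) by (intro exI[of _ "\<lambda>t. (t - 1) * v t"]) (auto intro!: continuous_intros)
  qed
qed

lemma smooth2_seg_integral:
  assumes "continuous_on UNIV w"
  shows "smooth2 (seg_integral D w k)"
  unfolding smooth2_def
proof (intro allI conjI)
  fix ds x y
  obtain v where v: "continuous_on UNIV v" "pdw ds (seg_integral D w k) = seg_integral D v (k + length ds)"
    using pdw_seg_integral[OF assms] by blast
  show "continuous_on UNIV (pdw ds (seg_integral D w k))"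
    using continuous_on_seg_integral[OF v(1)] v(2) by simp
  show "(\<lambda>s. pdw ds (seg_integral D w k) (s, y)) differentiable at x"
    using has_real_derivative_seg_integral_fst[OF v(1)] v(2) real_differentiable_def by fastforce
  show "(\<lambda>s. pdw ds (seg_integral D w k) (x, s)) differentiable at y"
    using has_real_derivative_seg_integral_snd[OF v(1)] v(2) real_differentiable_def by fastforce
qed

lemma pd1_seg_integral_bweight:
  "pd1 (seg_integral D (bweight \<alpha> \<beta>) k) = seg_integral D (bweight (Suc \<alpha>) \<beta>) (Suc k)"
proof -
  have "(\<lambda>t. t * bweight \<alpha> \<beta> t) = bweight (Suc \<alpha>) \<beta>" by (simp add: bweight_def fun_eq_iff)
  then show ?thesis using pd1_seg_integral[OF continuous_on_bweight] by simp
qed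

lemma pd2_seg_integral_bweight:
  "pd2 (seg_integral D (bweight \<alpha> \<beta>) k) = seg_integral D (bweight \<alpha> (Suc \<beta>)) (Suc k)"
proof -
  have "(\<lambda>t. (t - 1) * bweight \<alpha> \<beta> t) = bweight \<alpha> (Suc \<beta>)" by (simp add: bweight_def fun_eq_iff)
  then show ?thesis using pd2_seg_integral[OF continuous_on_bweight] by simp
qed

lemma pd_power_seg_integral_bweight:
  "(pd1 ^^ m) ((pd2 ^^ n) (seg_integral D (bweight \<alpha> \<beta>) k))
     = seg_integral D (bweight (\<alpha> + m) (\<beta> + n)) (k + m + n)"
proof -
  have "(pd2 ^^ n) (seg_integral D (bweight \<alpha> \<beta>) k) = seg_integral D (bweight \<alpha> (\<beta> + n)) (k + n)"
    by (induction n) (simp_all add: pd2_seg_integral_bweight)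
  moreover have "(pd1 ^^ m) (seg_integral D (bweight \<alpha> \<beta>') k') = seg_integral D (bweight (\<alpha> + m) \<beta>') (k' + m)"
    for \<beta>' k' by (induction m) (simp_all add: pd1_seg_integral_bweight)
  ultimately show ?thesis by (simp add: add_ac)
qed

lemma seg_integral_bweight_by_parts:
  assumes "x + y \<noteq> 0"
  shows "seg_integral D (bweight \<alpha> \<beta>) (Suc k) (x, y)
    = (bweight \<alpha> \<beta> 1 * D k x - bweight \<alpha> \<beta> 0 * D k (- y)
       - (of_nat \<alpha> * seg_integral D (bweight (\<alpha> - 1) \<beta>) k (x, y)
          + of_nat \<beta> * seg_integral D (bweight \<alpha> (\<beta> - 1)) k (x, y))) / (x + y)"
proof -
  have "continuous_on UNIV (\<lambda>t. of_nat \<alpha> * bweight (\<alpha> - 1) \<beta> t + of_nat \<beta> * bweight \<alpha> (\<beta> - 1) t)"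
    unfolding bweight_def by (intro continuous_intros)
  from seg_integral_by_parts[OF has_real_derivative_bweight this assms] show ?thesis
    by (simp add: seg_integral_lincomb[OF continuous_on_bweight continuous_on_bweight])
qed

end

definition dxa :: "(real \<Rightarrow> real) \<Rightarrow> nat \<Rightarrow> real \<Rightarrow> real" where
  "dxa a k = (deriv ^^ k) (\<lambda>s. s * a s)"

definition qsym :: "(real \<Rightarrow> real) \<Rightarrow> real \<times> real \<Rightarrow> real" where
  "qsym a = seg_integral (dxa a) (bweight 0 0) 1"

lemma has_real_derivative_higher_deriv:
  "smooth1 a \<Longrightarrow> ((deriv ^^ k) a has_real_derivative (deriv ^^ Suc k) a s) (at s)"
  unfolding smooth1_def by (simp add: DERIV_deriv_iff_real_differentiable)

lemma has_real_derivative_leibniz_xa: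
  assumes "smooth1 a"
  shows "((\<lambda>s. s * (deriv ^^ k) a s + of_nat k * (deriv ^^ (k - 1)) a s) has_real_derivative
           s * (deriv ^^ Suc k) a s + of_nat (Suc k) * (deriv ^^ k) a s) (at s)"
  using DERIV_add[OF DERIV_mult[OF DERIV_ident has_real_derivative_higher_deriv[OF assms, of k]]
      DERIV_cmult[OF has_real_derivative_higher_deriv[OF assms, of "k - 1"], of "of_nat k"]]
  by (cases k) (auto simp: algebra_simps)

lemma dxa_eq:
  assumes "smooth1 a"
  shows "dxa a k = (\<lambda>s. s * (deriv ^^ k) a s + of_nat k * (deriv ^^ (k - 1)) a s)"
proof (induction k)
  case 0
  then show ?case by (simp add: dxa_def)
next
  case (Suc k)
  then have "dxa a (Suc k) = deriv (\<lambda>s. s * (deriv ^^ k) a s + of_nat k * (deriv ^^ (k - 1)) a s)"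
    by (simp add: dxa_def)
  then show ?case
    using has_real_derivative_leibniz_xa[OF assms] by (auto intro!: ext DERIV_imp_deriv)
qed

lemma has_real_derivative_dxa:
  "smooth1 a \<Longrightarrow> (dxa a k has_real_derivative dxa a (Suc k) s) (at s)"
  using has_real_derivative_leibniz_xa by (simp add: dxa_eq)

lemma scaled_term_le:
  fixes F R X Z B :: real
  assumes "\<bar>F\<bar> * R \<le> B" "0 \<le> R" "of_nat n \<le> (4::real)" "0 \<le> X" "X \<le> Z"
  shows "of_nat n * \<bar>F\<bar> * (X * R) \<le> 4 * Z * B"
proof -
  have "(of_nat n * X) * (\<bar>F\<bar> * R) \<le> (4 * Z) * B"
    using assms by (intro mult_mono) auto
  then show ?thesis by (simp add: mult_ac)
qed

locale condA_symbol =
  fixes C :: real and a :: "real \<Rightarrow> real"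
  assumes C_pos: "0 < C" and smooth: "smooth1 a" and condA: "condA C a"
begin

sublocale derivative_tower "dxa a"
  by unfold_locales (rule has_real_derivative_dxa[OF smooth])

lemma a_pos: "0 < a x"
  using condA unfolding condA_def by blast

lemma a_minus: "a (- x) = a x"
  using condA unfolding condA_def by blast

lemma a_abs: "a \<bar>s\<bar> = a s"
  by (cases "0 \<le> s") (auto simp: a_minus)

lemma a_mono: "0 \<le> u \<Longrightarrow> u \<le> v \<Longrightarrow> a u \<le> a v"
  using condA unfolding condA_def by (meson atLeast_iff mono_onD order_trans)

lemma a_le_if_abs_le: "\<bar>s\<bar> \<le> M \<Longrightarrow> a s \<le> a M"
  using a_mono[of "\<bar>s\<bar>" M] a_abs[of s] by simp

lemma higher_deriv_bound:
  assumes "j \<le> 5"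
  shows "\<bar>(deriv ^^ j) a s\<bar> * jbr s ^ j \<le> (C + 1) * a s"
proof (cases "j = 0")
  case True
  then show ?thesis using a_pos[of s] C_pos by (simp add: algebra_simps)
next
  case False
  with assms condA have "\<bar>(deriv ^^ j) a s\<bar> \<le> C * a s / jbr s ^ j"
    unfolding condA_def by auto
  then show ?thesis using jbr_pos[of s] a_pos[of s] by (simp add: pos_le_divide_eq algebra_simps)
qed

lemma dxa_bound:
  assumes "k \<le> 5"
  shows "\<bar>dxa a k s\<bar> * jbr s ^ k \<le> 6 * (C + 1) * a s * jbr s"
proof -
  have main: "\<bar>s * (deriv ^^ k) a s\<bar> * jbr s ^ k \<le> jbr s * ((C + 1) * a s)"
    using mult_mono[OF abs_le_jbr higher_deriv_bound[OF assms]]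
    by (simp add: abs_mult mult_ac)
  have lower: "\<bar>of_nat k * (deriv ^^ (k - 1)) a s\<bar> * jbr s ^ k \<le> 5 * ((C + 1) * a s) * jbr s"
  proof (cases k)
    case 0
    then show ?thesis using a_pos[of s] C_pos by simp
  next
    case (Suc m)
    have "of_nat k \<le> (5::real)" using assms by simp
    from mult_mono[OF this higher_deriv_bound[of m s]]
    have "of_nat k * (\<bar>(deriv ^^ m) a s\<bar> * jbr s ^ m) \<le> 5 * ((C + 1) * a s)"
      using assms Suc by simp
    then show ?thesis using Suc by (simp add: abs_mult mult_ac mult_left_mono)
  qed
  have "\<bar>dxa a k s\<bar> * jbr s ^ k
      \<le> \<bar>s * (deriv ^^ k) a s\<bar> * jbr s ^ k + \<bar>of_nat k * (deriv ^^ (k - 1)) a s\<bar> * jbr s ^ k"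
    unfolding dxa_eq[OF smooth] distrib_right[symmetric] by (intro mult_right_mono abs_triangle_ineq) simp
  also have "\<dots> \<le> jbr s * ((C + 1) * a s) + 5 * ((C + 1) * a s) * jbr s"
    using main lower by (rule add_mono)
  finally show ?thesis by (simp add: algebra_simps)
qed

lemma dxa_Suc_bound:
  assumes "k \<le> 4" "\<bar>s\<bar> \<le> M"
  shows "\<bar>dxa a (Suc k) s\<bar> * jbr s ^ k \<le> 6 * (C + 1) * a M"
proof -
  have "(\<bar>dxa a (Suc k) s\<bar> * jbr s ^ k) * jbr s \<le> (6 * (C + 1) * a s) * jbr s"
    using dxa_bound[of "Suc k" s] assms by (simp add: mult_ac)
  then have "\<bar>dxa a (Suc k) s\<bar> * jbr s ^ k \<le> 6 * (C + 1) * a s"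
    using jbr_pos[of s] by simp
  also have "\<dots> \<le> 6 * (C + 1) * a M"
    using a_le_if_abs_le[OF assms(2)] C_pos by simp
  finally show ?thesis .
qed

lemma dxa_endpoint_bound:
  assumes "\<bar>z\<bar> \<le> M" "e \<le> 1" "m + e \<le> 5"
  shows "\<bar>dxa a (m + e) z\<bar> * jbr z ^ m * jbr M ^ e \<le> 6 * (C + 1) * a M * jbr M"
proof (cases e)
  case 0
  have "\<bar>dxa a m z\<bar> * jbr z ^ m \<le> 6 * (C + 1) * a z * jbr z"
    using dxa_bound assms 0 by simp
  also have "\<dots> \<le> 6 * (C + 1) * a M * jbr M"
    using a_le_if_abs_le[OF assms(1)] jbr_mono[of z M] assms(1) C_pos a_pos[of z] a_pos[of M] jbr_pos[of z]
    by (intro mult_mono) (auto simp: less_imp_le)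
  finally show ?thesis using 0 by simp
next
  case (Suc e')
  then have "e = 1" using assms by simp
  with assms have "\<bar>dxa a (Suc m) z\<bar> * jbr z ^ m \<le> 6 * (C + 1) * a M"
    by (intro dxa_Suc_bound) auto
  then show ?thesis using \<open>e = 1\<close> jbr_pos[of M] by (simp add: mult_right_mono)
qed

lemma seg_integral_bound_pointwise:
  fixes x y :: real
  assumes n: "\<alpha> + \<beta> + e \<le> 4"
    and regime: "max \<bar>x\<bar> \<bar>y\<bar> \<le> 1 \<or> 2 * \<bar>x + y\<bar> \<le> max \<bar>x\<bar> \<bar>y\<bar>"
  shows "\<bar>seg_integral (dxa a) (bweight \<alpha> \<beta>) (\<alpha> + \<beta> + 1 + e) (x, y)\<bar>
           * (jbr x ^ \<alpha> * jbr y ^ \<beta> * jbr (max \<bar>x\<bar> \<bar>y\<bar>) ^ e)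
         \<le> 16 * (6 * (C + 1)) * a (max \<bar>x\<bar> \<bar>y\<bar>)"
proof -
  define M where "M = max \<bar>x\<bar> \<bar>y\<bar>"
  define P where "P = jbr x ^ \<alpha> * jbr y ^ \<beta> * jbr M ^ e"
  define B where "B = 16 * (6 * (C + 1)) * a M / P"
  have P: "0 < P" unfolding P_def using jbr_pos by simp
  have "norm (integral {0..1} (\<lambda>t. bweight \<alpha> \<beta> t * dxa a (\<alpha> + \<beta> + 1 + e) (- y + (x + y) * t)))
          \<le> B * (1 - 0)"
  proof (rule integral_bound)
    fix t :: real
    assume t: "t \<in> {0..1}"
    define s where "s = - y + (x + y) * t"
    have "\<bar>dxa a (Suc (\<alpha> + \<beta> + e)) s\<bar> * P \<le> \<bar>dxa a (Suc (\<alpha> + \<beta> + e)) s\<bar> * (16 * jbr s ^ (\<alpha> + \<beta> + e))"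
      unfolding P_def M_def s_def by (intro mult_left_mono jbr_monomial_le_segment t n regime) simp
    also have "\<dots> \<le> 16 * (6 * (C + 1) * a M)"
      using dxa_Suc_bound[OF n abs_segment_le_max[OF t]] unfolding M_def s_def by simp
    finally have "\<bar>dxa a (\<alpha> + \<beta> + 1 + e) s\<bar> \<le> B"
      unfolding B_def using P by (simp add: pos_le_divide_eq algebra_simps)
    with abs_bweight_le_1[OF t] have "\<bar>bweight \<alpha> \<beta> t\<bar> * \<bar>dxa a (\<alpha> + \<beta> + 1 + e) s\<bar> \<le> 1 * B"
      by (intro mult_mono) auto
    then show "norm (bweight \<alpha> \<beta> t * dxa a (\<alpha> + \<beta> + 1 + e) s) \<le> B"
      by (simp add: abs_mult)
  next
    have "continuous_on UNIV (\<lambda>t. bweight \<alpha> \<beta> t * dxa a (\<alpha> + \<beta> + 1 + e) (- y + (x + y) * t))"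
      using continuous_on_affine_integrand[OF continuous_on_bweight, where b="\<lambda>_. - y" and c="\<lambda>t. t"]
      by simp
    then show "continuous_on {0..1}
        (\<lambda>t. bweight \<alpha> \<beta> t * dxa a (\<alpha> + \<beta> + 1 + e) (- y + (x + y) * t))"
      by (rule continuous_on_subset) simp
  qed simp
  then show ?thesis using P unfolding seg_integral_def B_def P_def M_def by (simp add: pos_le_divide_eq)
qed

lemma bweight_endpoint_bounds:
  fixes x y :: real
  assumes "\<alpha> + \<beta> + e \<le> 5" "e \<le> 1"
  defines "M \<equiv> max \<bar>x\<bar> \<bar>y\<bar>"
  shows "\<bar>bweight \<alpha> \<beta> 1 * dxa a (\<alpha> + \<beta> + e) x\<bar> * (jbr x ^ \<alpha> * jbr y ^ \<beta> * jbr M ^ e)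
           \<le> 6 * (C + 1) * a M * jbr M" (is "?right \<le> ?B")
    and "\<bar>bweight \<alpha> \<beta> 0 * dxa a (\<alpha> + \<beta> + e) (- y)\<bar> * (jbr x ^ \<alpha> * jbr y ^ \<beta> * jbr M ^ e)
           \<le> 6 * (C + 1) * a M * jbr M" (is "?left \<le> ?B")
proof -
  have B: "0 \<le> ?B" using a_pos[of M] C_pos by simp
  show "?right \<le> ?B"
  proof (cases "\<beta> = 0")
    case True
    with dxa_endpoint_bound[of x M e \<alpha>] assms show ?thesis by (simp add: bweight_def mult_ac)
  qed (use B in \<open>simp add: bweight_def zero_power\<close>)
  show "?left \<le> ?B"
  proof (cases "\<alpha> = 0")
    case True
    with dxa_endpoint_bound[of "- y" M e \<beta>] assms show ?thesis
      by (simp add: bweight_def abs_mult power_abs mult_ac)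
  qed (use B in \<open>simp add: bweight_def zero_power\<close>)
qed

lemma seg_integral_bound_by_parts:
  fixes x y :: real
  assumes M: "1 \<le> max \<bar>x\<bar> \<bar>y\<bar>" "max \<bar>x\<bar> \<bar>y\<bar> \<le> 2 * \<bar>x + y\<bar>" and e: "e \<le> 1"
  shows "\<alpha> + \<beta> = n \<Longrightarrow> n + 1 + e \<le> 5 \<Longrightarrow>
    \<bar>seg_integral (dxa a) (bweight \<alpha> \<beta>) (n + 1 + e) (x, y)\<bar>
      * (jbr x ^ \<alpha> * jbr y ^ \<beta> * jbr (max \<bar>x\<bar> \<bar>y\<bar>) ^ e)
    \<le> 8 * (6 * (C + 1)) * 33 ^ n * a (max \<bar>x\<bar> \<bar>y\<bar>)"
proof (induction n arbitrary: \<alpha> \<beta> rule: less_induct)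
  case (less n)
  define M where "M = max \<bar>x\<bar> \<bar>y\<bar>"
  define P where "P = jbr x ^ \<alpha> * jbr y ^ \<beta> * jbr M ^ e"
  define R where "R = (if n = 0 then 0 else 4 * (8 * (6 * (C + 1)) * 33 ^ (n - 1) * a M))"
  define F where "F i j = seg_integral (dxa a) (bweight i j) (n + e) (x, y)" for i j
  have xy: "x + y \<noteq> 0" using M by auto
  have MM: "jbr M \<le> 4 * \<bar>x + y\<bar>" using jbr_le_twice[OF M(1)] M(2) unfolding M_def by linarith
  have P: "0 < P" unfolding P_def using jbr_pos by simp
  have R: "0 \<le> R" unfolding R_def using C_pos a_pos[of M] by simp
  have IH: "\<bar>F i j\<bar> * (jbr x ^ i * jbr y ^ j * jbr M ^ e) \<le> 8 * (6 * (C + 1)) * 33 ^ (n - 1) * a M"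
    if "i + j = n - 1" "n \<noteq> 0" for i j
    using less.IH[of "n - 1" i j] less.prems that unfolding F_def M_def by simp
  have lower_\<alpha>: "of_nat \<alpha> * \<bar>F (\<alpha> - 1) \<beta>\<bar> * P \<le> jbr M * R"
  proof (cases \<alpha>)
    case (Suc i)
    with less.prems have n: "n \<noteq> 0" "i + \<beta> = n - 1" by auto
    have "of_nat \<alpha> * \<bar>F i \<beta>\<bar> * (jbr x * (jbr x ^ i * jbr y ^ \<beta> * jbr M ^ e))
        \<le> 4 * jbr M * (8 * (6 * (C + 1)) * 33 ^ (n - 1) * a M)"
      by (rule scaled_term_le[OF IH[OF n(2,1)]]) (use Suc less.prems in \<open>simp_all add: M_def jbr_mono\<close>)
    then show ?thesis using Suc n unfolding P_def R_def by (simp add: mult_ac)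
  qed (use R in simp)
  have lower_\<beta>: "of_nat \<beta> * \<bar>F \<alpha> (\<beta> - 1)\<bar> * P \<le> jbr M * R"
  proof (cases \<beta>)
    case (Suc j)
    with less.prems have n: "n \<noteq> 0" "\<alpha> + j = n - 1" by auto
    have "of_nat \<beta> * \<bar>F \<alpha> j\<bar> * (jbr y * (jbr x ^ \<alpha> * jbr y ^ j * jbr M ^ e))
        \<le> 4 * jbr M * (8 * (6 * (C + 1)) * 33 ^ (n - 1) * a M)"
      by (rule scaled_term_le[OF IH[OF n(2,1)]]) (use Suc less.prems in \<open>simp_all add: M_def jbr_mono\<close>)
    then show ?thesis using Suc n unfolding P_def R_def by (simp add: mult_ac)
  qed (use R in simp)
  define T1 where "T1 = bweight \<alpha> \<beta> 1 * dxa a (n + e) x"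
  define T2 where "T2 = bweight \<alpha> \<beta> 0 * dxa a (n + e) (- y)"
  have endpoints: "\<bar>T1\<bar> * P \<le> 6 * (C + 1) * a M * jbr M" "\<bar>T2\<bar> * P \<le> 6 * (C + 1) * a M * jbr M"
    using bweight_endpoint_bounds[where \<alpha>=\<alpha> and \<beta>=\<beta> and x=x and y=y and e=e] less.prems e
    unfolding T1_def T2_def P_def M_def less.prems(1) by simp_all
  have triangle: "\<bar>p - q - (u + v)\<bar> \<le> \<bar>p\<bar> + \<bar>q\<bar> + \<bar>u\<bar> + \<bar>v\<bar>" for p q u v :: real
    by linarith
  have "\<bar>seg_integral (dxa a) (bweight \<alpha> \<beta>) (Suc (n + e)) (x, y)\<bar> * P
      = \<bar>T1 - T2 - (of_nat \<alpha> * F (\<alpha> - 1) \<beta> + of_nat \<beta> * F \<alpha> (\<beta> - 1))\<bar> * P / \<bar>x + y\<bar>"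
    unfolding seg_integral_bweight_by_parts[OF xy] T1_def T2_def F_def by (simp add: abs_divide)
  also have "\<dots> \<le> (\<bar>T1\<bar> * P + \<bar>T2\<bar> * P + of_nat \<alpha> * \<bar>F (\<alpha> - 1) \<beta>\<bar> * P
      + of_nat \<beta> * \<bar>F \<alpha> (\<beta> - 1)\<bar> * P) / \<bar>x + y\<bar>"
    using mult_right_mono[OF triangle[of T1 T2 "of_nat \<alpha> * F (\<alpha> - 1) \<beta>" "of_nat \<beta> * F \<alpha> (\<beta> - 1)"]
        less_imp_le[OF P]]
    by (intro divide_right_mono) (simp_all add: abs_mult distrib_right)
  also have "\<dots> \<le> jbr M * (2 * (6 * (C + 1) * a M) + 2 * R) / \<bar>x + y\<bar>"
    using endpoints lower_\<alpha> lower_\<beta> by (intro divide_right_mono) (simp_all add: algebra_simps)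
  also have "\<dots> \<le> 4 * (2 * (6 * (C + 1) * a M) + 2 * R)"
  proof -
    have "jbr M * (2 * (6 * (C + 1) * a M) + 2 * R) \<le> (4 * \<bar>x + y\<bar>) * (2 * (6 * (C + 1) * a M) + 2 * R)"
      using MM R C_pos a_pos[of M] by (intro mult_right_mono) auto
    then show ?thesis using xy by (simp add: divide_le_eq mult_ac)
  qed
  also have "\<dots> \<le> 8 * (6 * (C + 1)) * 33 ^ n * a M"
  proof (cases n)
    case (Suc m)
    have "1 + 32 * (33::real) ^ m \<le> 33 ^ Suc m" by simp
    from mult_right_mono[OF this, of "8 * (6 * (C + 1)) * a M"] show ?thesis
      using Suc C_pos a_pos[of M] unfolding R_def by (simp add: algebra_simps)
  qed (simp add: R_def algebra_simps)
  finally show ?case unfolding P_def M_def by simp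
qed

lemma seg_integral_bweight_bound:
  fixes x y :: real
  assumes "\<alpha> + \<beta> + 1 + e \<le> 5" "e \<le> 1"
  shows "\<bar>seg_integral (dxa a) (bweight \<alpha> \<beta>) (\<alpha> + \<beta> + 1 + e) (x, y)\<bar>
           * (jbr x ^ \<alpha> * jbr y ^ \<beta> * jbr (max \<bar>x\<bar> \<bar>y\<bar>) ^ e)
         \<le> 48 * (C + 1) * 33 ^ 4 * a (max \<bar>x\<bar> \<bar>y\<bar>)"
proof (cases "max \<bar>x\<bar> \<bar>y\<bar> \<le> 1 \<or> 2 * \<bar>x + y\<bar> \<le> max \<bar>x\<bar> \<bar>y\<bar>")
  case True
  with assms have "\<bar>seg_integral (dxa a) (bweight \<alpha> \<beta>) (\<alpha> + \<beta> + 1 + e) (x, y)\<bar>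
           * (jbr x ^ \<alpha> * jbr y ^ \<beta> * jbr (max \<bar>x\<bar> \<bar>y\<bar>) ^ e)
         \<le> 16 * (6 * (C + 1)) * a (max \<bar>x\<bar> \<bar>y\<bar>)"
    by (intro seg_integral_bound_pointwise) auto
  also have "\<dots> \<le> 48 * (C + 1) * 33 ^ 4 * a (max \<bar>x\<bar> \<bar>y\<bar>)"
    by (rule mult_right_mono) (use C_pos less_imp_le[OF a_pos] in auto)
  finally show ?thesis .
next
  case False
  with assms have "\<bar>seg_integral (dxa a) (bweight \<alpha> \<beta>) (\<alpha> + \<beta> + 1 + e) (x, y)\<bar>
           * (jbr x ^ \<alpha> * jbr y ^ \<beta> * jbr (max \<bar>x\<bar> \<bar>y\<bar>) ^ e)
         \<le> 8 * (6 * (C + 1)) * 33 ^ (\<alpha> + \<beta>) * a (max \<bar>x\<bar> \<bar>y\<bar>)"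
    by (intro seg_integral_bound_by_parts) auto
  also have "\<dots> \<le> 48 * (C + 1) * 33 ^ 4 * a (max \<bar>x\<bar> \<bar>y\<bar>)"
  proof (rule mult_right_mono)
    have "48 * (C + 1) * 33 ^ (\<alpha> + \<beta>) \<le> 48 * (C + 1) * (33::real) ^ 4"
      using assms C_pos by (intro mult_left_mono power_increasing) auto
    then show "8 * (6 * (C + 1)) * 33 ^ (\<alpha> + \<beta>) \<le> 48 * (C + 1) * (33::real) ^ 4"
      by simp
  qed (use less_imp_le[OF a_pos] in auto)
  finally show ?thesis .
qed

lemma smooth2_qsym: "smooth2 (qsym a)"
  unfolding qsym_def by (rule smooth2_seg_integral[OF continuous_on_bweight])

lemma qsym_eq_integral:
  "qsym a (x, y) = integral {0..1} (\<lambda>t. deriv (\<lambda>s. s * a s) (- y + (x + y) * t))"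
  by (simp add: qsym_def seg_integral_def bweight_0_0 dxa_def)

lemma qsym_eq_quotient:
  assumes "x + y \<noteq> 0"
  shows "qsym a (x, y) = (x * a x + y * a y) / (x + y)"
proof -
  have "qsym a (x, y) = (x * a x - (- y) * a (- y) - seg_integral (dxa a) (\<lambda>_. 0) 0 (x, y)) / (x + y)"
    using seg_integral_by_parts[of "\<lambda>_. 1" "\<lambda>_. 0" x y 0] assms
    by (simp add: qsym_def bweight_0_0 dxa_def)
  then show ?thesis by (simp add: seg_integral_def a_minus)
qed

lemma qsym_antidiagonal: "qsym a (x, - x) = x * deriv a x + a x"
  by (simp add: qsym_def seg_integral_def bweight_0_0 dxa_eq[OF smooth])

text \<open>\<open>a\<close> is even and nondecreasing on \<open>[0, \<infinity>)\<close>, so \<open>a'\<close> has the sign of its argument.\<close>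
lemma mult_deriv_nonneg: "0 \<le> s * deriv a s"
proof -
  have a': "(a has_real_derivative deriv a s) (at s)"
    using has_real_derivative_higher_deriv[OF smooth, of 0 s] by simp
  show ?thesis
  proof (cases "0 \<le> s")
    case True
    have "0 \<le> deriv a s"
    proof (rule ccontr)
      assume "\<not> 0 \<le> deriv a s"
      then obtain d where d: "0 < d" "\<And>h. 0 < h \<Longrightarrow> h < d \<Longrightarrow> a (s + h) < a s"
        using DERIV_neg_dec_right[OF a'] by force
      then have "a (s + d / 2) < a s" by simp
      moreover have "a s \<le> a (s + d / 2)" by (rule a_mono) (use True d(1) in simp_all)
      ultimately show False by simp
    qed
    with True show ?thesis by simp
  next
    case False
    have "deriv a s \<le> 0"
    proof (rule ccontr)
      assume "\<not> deriv a s \<le> 0"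
      then obtain d where d: "0 < d" "\<And>h. 0 < h \<Longrightarrow> h < d \<Longrightarrow> a (s - h) < a s"
        using DERIV_pos_inc_left[OF a'] by force
      then have "a (s - d / 2) < a s" by simp
      moreover have "a \<bar>s\<bar> \<le> a \<bar>s - d / 2\<bar>" by (rule a_mono) (use False d(1) in simp_all)
      ultimately show False by (simp add: a_abs)
    qed
    with False show ?thesis by (simp add: mult_nonpos_nonpos)
  qed
qed

lemma half_a_le_quotient:
  fixes u v :: real
  assumes uv: "\<bar>v\<bar> \<le> \<bar>u\<bar>" and s: "u + v \<noteq> 0"
  shows "a u / 2 \<le> (u * a u + v * a v) / (u + v)"
proof -
  define A B where "A = a u" and "B = a v"
  have BA: "B \<le> A" unfolding A_def B_def using a_le_if_abs_le[of v "\<bar>u\<bar>"] uv a_abs[of u] by simp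
  have B0: "0 < B" unfolding B_def by (rule a_pos)
  show ?thesis
  proof (cases "0 < u + v")
    case True
    have "A * (u + v) \<le> 2 * (u * A + v * B)"
    proof (cases "0 \<le> v")
      case True
      with uv \<open>0 < u + v\<close> have "0 \<le> A * (u - v)" using B0 BA by simp
      moreover have "0 \<le> v * B" using True B0 by simp
      ultimately show ?thesis by (simp add: algebra_simps)
    next
      case False
      then have "v * A \<le> v * B" using BA by (simp add: mult_left_mono_neg)
      moreover have "0 \<le> A * (u + v)" using \<open>0 < u + v\<close> BA B0 by simp
      ultimately show ?thesis by (simp add: algebra_simps)
    qed
    with True show ?thesis unfolding A_def B_def by (simp add: field_simps)
  next
    case False
    with s have neg: "u + v < 0" by linarith
    have "2 * (u * A + v * B) \<le> A * (u + v)"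
    proof (cases "v \<le> 0")
      case True
      with uv neg have "A * (u - v) \<le> 0" using B0 BA by (simp add: mult_nonneg_nonpos)
      moreover have "v * B \<le> 0" using True B0 by (simp add: mult_nonpos_nonneg)
      ultimately show ?thesis by (simp add: algebra_simps)
    next
      case False
      then have "v * B \<le> v * A" using BA by (simp add: mult_left_mono)
      moreover have "A * (u + v) \<le> 0" using neg BA B0 by (simp add: mult_nonneg_nonpos)
      ultimately show ?thesis by (simp add: algebra_simps)
    qed
    with neg show ?thesis unfolding A_def B_def by (simp add: field_simps)
  qed
qed

lemma a_max_le_twice_qsym: "a (max \<bar>x\<bar> \<bar>y\<bar>) \<le> 2 * qsym a (x, y)"
proof (cases "x + y = 0")
  case True
  then have "y = - x" by linarith
  then show ?thesis using qsym_antidiagonal[of x] mult_deriv_nonneg[of x] a_abs[of x] a_pos[of x] by simp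
next
  case False
  show ?thesis
  proof (cases "\<bar>y\<bar> \<le> \<bar>x\<bar>")
    case True
    then have "a (max \<bar>x\<bar> \<bar>y\<bar>) = a x" using a_abs[of x] by (simp add: max_def)
    moreover have "a x / 2 \<le> qsym a (x, y)"
      using half_a_le_quotient[OF True False] qsym_eq_quotient[OF False] by simp
    ultimately show ?thesis by simp
  next
    case not_le: False
    then have "a (max \<bar>x\<bar> \<bar>y\<bar>) = a y" using a_abs[of y] by (simp add: max_def)
    moreover have "a y / 2 \<le> qsym a (x, y)"
      using half_a_le_quotient[of x y] not_le False qsym_eq_quotient[OF False] by (simp add: add.commute)
    ultimately show ?thesis by simp
  qed
qed

lemma qsym_pos: "0 < qsym a z"
  using a_max_le_twice_qsym[of "fst z" "snd z"] a_pos[of "max \<bar>fst z\<bar> \<bar>snd z\<bar>"] by simp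

lemma a_max_le_qsym: "a (max \<bar>x\<bar> \<bar>y\<bar>) \<le> 48 * (C + 1) * 33 ^ 4 * qsym a (x, y)"
proof -
  have "2 * qsym a (x, y) \<le> 48 * (C + 1) * 33 ^ 4 * qsym a (x, y)"
    using qsym_pos[of "(x, y)"] C_pos by (intro mult_right_mono) auto
  with a_max_le_twice_qsym show ?thesis by (rule order_trans)
qed

lemma pd_power_qsym:
  "(pd1 ^^ g1) ((pd2 ^^ g2) (qsym a)) = seg_integral (dxa a) (bweight g1 g2) (g1 + g2 + 1 + 0)"
  unfolding qsym_def pd_power_seg_integral_bweight by (simp add: add_ac)

text \<open>The weights \<open>t\<close> and \<open>t - 1\<close> of \<open>\<partial>\<^sub>1\<close> and \<open>\<partial>\<^sub>2\<close> differ by \<open>1\<close>, so \<open>\<partial>\<^sub>1 - \<partial>\<^sub>2\<close> only raises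
  the order of the derivative of \<open>s a(s)\<close>.\<close>
lemma pd_power_pd_diff_qsym:
  "(pd1 ^^ g1) ((pd2 ^^ g2) (\<lambda>z. pd1 (qsym a) z - pd2 (qsym a) z))
     = seg_integral (dxa a) (bweight g1 g2) (g1 + g2 + 1 + 1)"
proof -
  have "(\<lambda>z. pd1 (qsym a) z - pd2 (qsym a) z) = seg_integral (dxa a) (bweight 0 0) 2"
  proof
    fix z
    have "pd1 (qsym a) z - pd2 (qsym a) z
        = seg_integral (dxa a) (\<lambda>t. 1 * bweight 1 0 t + (- 1) * bweight 0 1 t) 2 z"
      unfolding seg_integral_lincomb[OF continuous_on_bweight continuous_on_bweight] qsym_def
      by (simp add: pd1_seg_integral_bweight pd2_seg_integral_bweight numeral_2_eq_2)
    also have "(\<lambda>t. 1 * bweight 1 0 t + (- 1) * bweight 0 1 t) = bweight 0 0"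
      by (simp add: bweight_def fun_eq_iff)
    finally show "pd1 (qsym a) z - pd2 (qsym a) z = seg_integral (dxa a) (bweight 0 0) 2 z" .
  qed
  then show ?thesis by (simp add: pd_power_seg_integral_bweight add_ac)
qed

lemma qsym_derivative_bound:
  assumes "g1 + g2 \<le> 3"
  shows "\<bar>(pd1 ^^ g1) ((pd2 ^^ g2) (qsym a)) (x, y)\<bar>
           \<le> 48 * (C + 1) * 33 ^ 4 * a (max \<bar>x\<bar> \<bar>y\<bar>) / (jbr x ^ g1 * jbr y ^ g2)"
  using seg_integral_bweight_bound[of g1 g2 0 x y] assms jbr_pos
  unfolding pd_power_qsym by (simp add: pos_le_divide_eq)

lemma qsym_pd_diff_derivative_bound:
  assumes "g1 + g2 \<le> 3"
  shows "\<bar>(pd1 ^^ g1) ((pd2 ^^ g2) (\<lambda>z. pd1 (qsym a) z - pd2 (qsym a) z)) (x, y)\<bar>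
           \<le> 48 * (C + 1) * 33 ^ 4 * a (max \<bar>x\<bar> \<bar>y\<bar>)
             / (jbr x ^ g1 * jbr y ^ g2 * jbr (max \<bar>x\<bar> \<bar>y\<bar>))"
  using seg_integral_bweight_bound[of g1 g2 1 x y] assms jbr_pos
  unfolding pd_power_pd_diff_qsym by (simp add: pos_le_divide_eq)

lemma qsym_le_a_max: "qsym a (x, y) \<le> 48 * (C + 1) * 33 ^ 4 * a (max \<bar>x\<bar> \<bar>y\<bar>)"
  using qsym_derivative_bound[of 0 0 x y] qsym_pos[of "(x, y)"] by simp

end

theorem lemma4p4:
  fixes C :: real
  assumes "C > 0"
  shows "\<exists>K>0. \<forall>a. smooth1 a \<and> condA C a \<longrightarrow>
    (\<exists>Q. smooth2 Q \<and> (\<forall>z. Q z > 0) \<and>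
      (\<forall>x y. x + y \<noteq> 0 \<longrightarrow> Q (x, y) = (x * a x + y * a y) / (x + y)) \<and>
      (\<forall>x y. Q (x, y) = integral {0..1} (\<lambda>t. deriv (\<lambda>s. s * a s) (- y + (x + y) * t))) \<and>
      (\<forall>x y. a (max \<bar>x\<bar> \<bar>y\<bar>) \<le> K * Q (x, y) \<and> Q (x, y) \<le> K * a (max \<bar>x\<bar> \<bar>y\<bar>)) \<and>
      (\<forall>g1 g2 :: nat. \<forall>x y. 1 \<le> g1 + g2 \<and> g1 + g2 \<le> 3 \<longrightarrow>
         \<bar>(pd1 ^^ g1) ((pd2 ^^ g2) Q) (x, y)\<bar>
           \<le> K * a (max \<bar>x\<bar> \<bar>y\<bar>) / (jbr x ^ g1 * jbr y ^ g2)) \<and>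
      (\<forall>g1 g2 :: nat. \<forall>x y. g1 + g2 \<le> 3 \<longrightarrow>
         \<bar>(pd1 ^^ g1) ((pd2 ^^ g2) (\<lambda>z. pd1 Q z - pd2 Q z)) (x, y)\<bar>
           \<le> K * a (max \<bar>x\<bar> \<bar>y\<bar>) / (jbr x ^ g1 * jbr y ^ g2 * jbr (max \<bar>x\<bar> \<bar>y\<bar>))))"
  apply (intro exI[of _ "48 * (C + 1) * 33 ^ 4"] conjI allI impI)
  subgoal using assms by simp
  subgoal premises hyps for a
  proof -
    interpret condA_symbol C a using assms hyps by unfold_locales auto
    show ?thesis
      using smooth2_qsym qsym_pos qsym_eq_quotient qsym_eq_integral a_max_le_qsym qsym_le_a_max
        qsym_derivative_bound qsym_pd_diff_derivative_bound
      by (intro exI[of _ "qsym a"] conjI allI impI) auto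
  qed
  done

end
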